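(* Let $R$ be a finite chain ring of length $2$ with residue field $\mathbb{F}_q$ and let $1\le n\le q^2+q$. Then $$\mathrm{m}_n(R)\le\left\lfloor\frac{(q+1)n-q}{q+2}\cdot(q^2+q+1)\right\rfloor.$$
   Context: Throughout, $R$ is a finite chain ring of nilpotency index (length) $2$, i.e. a finite local ring with radical $\mathrm{rad}R\neq 0$, $(\mathrm{rad}R)^2=0$, whose one-sided ideals form the chain $R\supsetneq\mathrm{rad}R\supsetneq 0$, with residue field $R/\mathrm{rad}R\cong\mathbb{F}_q$ ($q$ a prime power); then $|R|=q^2$. The projective Hjelmslev plane $\mathrm{PHG}(2,R)$ is the incidence structure whose points are the free rank-$1$ submodules of the right module $R_R^3$, whose lines are the free rank-$2$ submodules of $R_R^3$, with incidence given by inclusion; it has $q^4+q^3+q^2$ points and each line contains $q^2+q$ points. A $(k,n)$-arc is a map $\mathcal{K}$ from the point set to $\mathbb{N}_0$ with $\sum_x\mathcal{K}(x)=k$ and $\sum_{x\in L}\mathcal{K}(x)\le n$ for every line $L$; it is projective if $\mathcal{K}$ takes only values in $\{0,1\}$ (i.e. it is a set of $k$ points meeting every line in at most $n$ points). For $0\le n\le q^2+q$, $\mathrm{m}_n(R)$ denotes the largest $k$ such that a projective $(k,n)$-arc exists in $\mathrm{PHG}(2,R)$. *)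

theory Defs
  imports Complex_Main
begin

definition right_ideal :: "'a::ring_1 set \<Rightarrow> bool" where
  "right_ideal I \<longleftrightarrow> 0 \<in> I \<and> (\<forall>x\<in>I. \<forall>y\<in>I. x + y \<in> I) \<and> (\<forall>x\<in>I. - x \<in> I)
     \<and> (\<forall>x\<in>I. \<forall>r. x * r \<in> I)"

definition left_ideal :: "'a::ring_1 set \<Rightarrow> bool" where
  "left_ideal I \<longleftrightarrow> 0 \<in> I \<and> (\<forall>x\<in>I. \<forall>y\<in>I. x + y \<in> I) \<and> (\<forall>x\<in>I. - x \<in> I)
     \<and> (\<forall>x\<in>I. \<forall>r. r * x \<in> I)"

definition chain_ring_len2 :: "'a::{ring_1,finite} set \<Rightarrow> bool" where
  "chain_ring_len2 N \<longleftrightarrow>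
     N \<noteq> {0} \<and> N \<noteq> UNIV \<and> (\<forall>x\<in>N. \<forall>y\<in>N. x * y = 0) \<and>
     {I. right_ideal I} = {UNIV, N, {0}} \<and> {I. left_ideal I} = {UNIV, N, {0}}"

definition smulr :: "'a::ring_1 \<times> 'a \<times> 'a \<Rightarrow> 'a \<Rightarrow> 'a \<times> 'a \<times> 'a" where
  "smulr v r = (case v of (a, b, c) \<Rightarrow> (a * r, b * r, c * r))"

definition vadd :: "'a::ring_1 \<times> 'a \<times> 'a \<Rightarrow> 'a \<times> 'a \<times> 'a \<Rightarrow> 'a \<times> 'a \<times> 'a" where
  "vadd v w = (case v of (a, b, c) \<Rightarrow> case w of (a', b', c') \<Rightarrow> (a + a', b + b', c + c'))"

text \<open>Points: free rank-1 submodules of R_R^3; lines: free rank-2 submodules.\<close>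
definition PHG_points :: "('a::ring_1 \<times> 'a \<times> 'a) set set" where
  "PHG_points = {P. \<exists>v. P = range (smulr v) \<and> inj (smulr v)}"

definition PHG_lines :: "('a::ring_1 \<times> 'a \<times> 'a) set set" where
  "PHG_lines = {L. \<exists>u w. L = range (\<lambda>(r, s). vadd (smulr u r) (smulr w s))
                      \<and> inj (\<lambda>(r, s). vadd (smulr u r) (smulr w s))}"

definition proj_arc :: "('a::ring_1 \<times> 'a \<times> 'a) set set \<Rightarrow> nat \<Rightarrow> nat \<Rightarrow> bool" where
  "proj_arc S k n \<longleftrightarrow> S \<subseteq> PHG_points \<and> finite S \<and> card S = k \<and>
     (\<forall>L\<in>PHG_lines. card {x\<in>S. x \<subseteq> L} \<le> n)"

definition m_n :: "'a::{ring_1,finite} itself \<Rightarrow> nat \<Rightarrow> nat" where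
  "m_n (_ :: 'a itself) n = Max {k. \<exists>S :: ('a \<times> 'a \<times> 'a) set set. proj_arc S k n}"

end

theory Submission
  imports Defs "HOL-Analysis.Convex"
begin

(*
  Let S be a projective (k, n)-arc and, for points x and y, let lambda(x, y) be the number of lines
  through both. Counting the pairs (y, L) with y in S and L a line through x gives
  sum_{y in S} lambda(x, y) <= lambda(x, x) n, where lambda(x, x) <= q^2 + q. Any two points lie
  on a common line and two distinct neighbours (points agreeing modulo the radical) on at least
  q lines, so k + (q - 1) c(x) <= q ((q + 1) n - q), where c(x) counts the neighbours of x in S.
  There are at most q^2 + q + 1 neighbour classes, hence by Cauchy-Schwarz
  k^2 <= (q^2 + q + 1) sum_{x in S} c(x); summing the first inequality over x then gives
  k (q + 2) <= ((q + 1) n - q) (q^2 + q + 1).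
  All line counts are computed at representatives (1, b, c), which every point attains after
  permuting coordinates cyclically and scaling by a unit.
*)

section \<open>Vectors, spans and lines\<close>

lemma smulr_simp [simp]: "smulr (a, b, c) r = (a * r, b * r, c * r)"
  by (simp add: smulr_def)

lemma vadd_simp [simp]: "vadd (a, b, c) (a', b', c') = (a + a', b + b', c + c')"
  by (simp add: vadd_def)

definition lincomb :: "'a::ring_1 \<times> 'a \<times> 'a \<Rightarrow> 'a \<times> 'a \<times> 'a \<Rightarrow> 'a \<times> 'a \<Rightarrow> 'a \<times> 'a \<times> 'a"
  where "lincomb u w = (\<lambda>(r, s). vadd (smulr u r) (smulr w s))"

lemma lincomb_simp [simp]:
  "lincomb (a, b, c) (a', b', c') (r, s) = (a * r + a' * s, b * r + b' * s, c * r + c' * s)"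
  by (simp add: lincomb_def)

abbreviation point :: "'a::ring_1 \<times> 'a \<times> 'a \<Rightarrow> ('a \<times> 'a \<times> 'a) set"
  where "point v \<equiv> range (smulr v)"

lemma PHG_lines_iff: "L \<in> PHG_lines \<longleftrightarrow> (\<exists>u w. L = range (lincomb u w) \<and> inj (lincomb u w))"
  by (simp add: PHG_lines_def lincomb_def)

lemma range_lincomb_subset:
  assumes "x \<in> range (lincomb u w)" "y \<in> range (lincomb u w)"
  shows "range (lincomb x y) \<subseteq> range (lincomb u w)"
proof
  fix z assume "z \<in> range (lincomb x y)"
  then obtain r s where z: "z = lincomb x y (r, s)" by auto
  obtain a b where x: "x = lincomb u w (a, b)" using assms(1) by auto
  obtain c d where y: "y = lincomb u w (c, d)" using assms(2) by auto
  have "z = lincomb u w (a * r + c * s, b * r + d * s)"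
    by (cases u; cases w) (simp add: z x y algebra_simps)
  then show "z \<in> range (lincomb u w)" by blast
qed

lemma range_lincomb_eq:
  assumes "x \<in> range (lincomb u w)" "y \<in> range (lincomb u w)"
    and "u \<in> range (lincomb x y)" "w \<in> range (lincomb x y)"
  shows "range (lincomb x y) = range (lincomb u w)"
  using range_lincomb_subset assms by (metis subset_antisym)

lemma lincomb_swap: "lincomb u w (r, s) = lincomb w u (s, r)"
  by (cases u; cases w) (simp add: add.commute)

lemma range_lincomb_commute: "range (lincomb u w) = range (lincomb w u)"
proof -
  have "range (lincomb u w) \<subseteq> range (lincomb w u)" for u w :: "'a \<times> 'a \<times> 'a"
    by (auto simp: lincomb_swap[of u w])
  then show ?thesis by blast
qed

lemma left_in_range_lincomb: "u \<in> range (lincomb u w)"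
  by (rule range_eqI[of _ _ "(1, 0)"]) (cases u; cases w; simp)

lemma right_in_range_lincomb: "w \<in> range (lincomb u w)"
  using left_in_range_lincomb range_lincomb_commute by blast

lemma point_subset_range_lincomb:
  assumes "v \<in> range (lincomb u w)"
  shows "point v \<subseteq> range (lincomb u w)"
proof
  fix z assume "z \<in> point v"
  then obtain t where z: "z = smulr v t" by auto
  obtain a b where v: "v = lincomb u w (a, b)" using assms by auto
  have "z = lincomb u w (a * t, b * t)"
    by (cases u; cases w) (simp add: z v algebra_simps)
  then show "z \<in> range (lincomb u w)" by blast
qed

lemma point_smulr_unit:
  assumes "u * u' = 1"
  shows "point (smulr v u) = point v"
proof (intro subset_antisym subsetI)
  obtain a b c where v: "v = (a, b, c)" by (cases v)
  fix z
  assume "z \<in> point (smulr v u)"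
  then obtain r where "z = smulr (smulr v u) r" by blast
  then have "z = smulr v (u * r)" by (simp add: v mult.assoc)
  then show "z \<in> point v" by blast
next
  obtain a b c where v: "v = (a, b, c)" by (cases v)
  fix z
  assume "z \<in> point v"
  then obtain r where z: "z = smulr v r" by blast
  have "u * (u' * r) = r" by (simp add: assms flip: mult.assoc)
  then have "z = smulr (smulr v u) (u' * r)" by (simp add: z v mult.assoc)
  then show "z \<in> point (smulr v u)" by blast
qed

lemma inj_if_range_eq:
  fixes f g :: "'b::finite \<Rightarrow> 'c"
  assumes "range f = range g" "inj g"
  shows "inj f"
proof -
  have "card (range f) = card (UNIV :: 'b set)"
    using assms by (simp add: card_image)
  then show ?thesis by (simp add: inj_on_iff_eq_card)
qed

lemma point_normalize:
  assumes "a * a' = 1" "a' * a = 1"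
  shows "point (a, b, c) = point (1, b * a', c * a')"
  using point_smulr_unit[of a' a "(a, b, c)"] assms by simp

definition joining_lines :: "('a::ring_1 \<times> 'a \<times> 'a) set \<Rightarrow> ('a \<times> 'a \<times> 'a) set \<Rightarrow> ('a \<times> 'a \<times> 'a) set set"
  where "joining_lines P Q = {L \<in> PHG_lines. P \<subseteq> L \<and> Q \<subseteq> L}"

lemma in_point: "v \<in> point v"
  by (rule range_eqI[of _ _ 1]) (cases v; simp)

section \<open>The radical of a chain ring of length two\<close>

lemma right_ideal_range_mult_left: "right_ideal (range (\<lambda>r. x * r))"
  unfolding right_ideal_def
proof (intro conjI ballI allI)
  show "0 \<in> range (\<lambda>r. x * r)" by (rule range_eqI[of _ _ 0]) simp
  fix a b assume "a \<in> range (\<lambda>r. x * r)" "b \<in> range (\<lambda>r. x * r)"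
  then show "a + b \<in> range (\<lambda>r. x * r)" by (auto simp flip: distrib_left)
next
  fix a r assume "a \<in> range (\<lambda>r. x * r)"
  then show "- a \<in> range (\<lambda>r. x * r)" "a * r \<in> range (\<lambda>r. x * r)"
    by (auto simp flip: mult_minus_right) (metis mult.assoc rangeI)
qed

lemma left_ideal_range_mult_right: "left_ideal (range (\<lambda>r. r * x))"
  unfolding left_ideal_def
proof (intro conjI ballI allI)
  show "0 \<in> range (\<lambda>r. r * x)" by (rule range_eqI[of _ _ 0]) simp
  fix a b assume "a \<in> range (\<lambda>r. r * x)" "b \<in> range (\<lambda>r. r * x)"
  then show "a + b \<in> range (\<lambda>r. r * x)" by (auto simp flip: distrib_right)
next
  fix a r assume "a \<in> range (\<lambda>r. r * x)"
  then show "- a \<in> range (\<lambda>r. r * x)" "r * a \<in> range (\<lambda>r. r * x)"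
    by (auto simp flip: mult_minus_left) (metis mult.assoc rangeI)
qed

lemma right_ideal_right_annihilator: "right_ideal {t. a * t = 0}"
  unfolding right_ideal_def by (auto simp: distrib_left mult.assoc[symmetric])

lemma card_range_eq_of_eq_iff:
  fixes f :: "'b \<Rightarrow> 'c" and g :: "'b \<Rightarrow> 'd"
  assumes "\<And>x y. f x = f y \<longleftrightarrow> g x = g y"
  shows "card (range f) = card (range g)"
proof -
  have "range f = (\<lambda>y. f (inv g y)) ` range g"
    using assms by (auto simp: image_iff) (metis f_inv_into_f rangeI)
  moreover have "inj_on (\<lambda>y. f (inv g y)) (range g)"
    by (rule inj_onI) (metis assms f_inv_into_f)
  ultimately show ?thesis by (simp add: card_image)
qed

locale chain_ring2 =
  fixes N :: "'a::{ring_1,finite} set"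
  assumes chain_ring: "chain_ring_len2 N"
begin

lemma N_neq_zero: "N \<noteq> {0}"
  and N_neq_UNIV: "N \<noteq> UNIV"
  and mult_N_N: "x \<in> N \<Longrightarrow> y \<in> N \<Longrightarrow> x * y = 0"
  and right_ideals: "{I. right_ideal I} = {UNIV, N, {0}}"
  and left_ideals: "{I. left_ideal I} = {UNIV, N, {0}}"
  using chain_ring by (simp_all add: chain_ring_len2_def)

lemma right_ideal_cases: "right_ideal I \<Longrightarrow> I = UNIV \<or> I = N \<or> I = {0}"
  using right_ideals by (metis insertE mem_Collect_eq singletonD)

lemma left_ideal_cases: "left_ideal I \<Longrightarrow> I = UNIV \<or> I = N \<or> I = {0}"
  using left_ideals by (metis insertE mem_Collect_eq singletonD)

lemma right_ideal_N: "right_ideal N"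
  using right_ideals by (metis insertI1 insertI2 mem_Collect_eq)

lemma left_ideal_N: "left_ideal N"
  using left_ideals by (metis insertI1 insertI2 mem_Collect_eq)

lemma zero_in_N: "0 \<in> N"
  and add_in_N: "x \<in> N \<Longrightarrow> y \<in> N \<Longrightarrow> x + y \<in> N"
  and uminus_in_N: "x \<in> N \<Longrightarrow> - x \<in> N"
  and mult_right_in_N: "x \<in> N \<Longrightarrow> x * r \<in> N"
  and mult_left_in_N: "x \<in> N \<Longrightarrow> r * x \<in> N"
  using right_ideal_N left_ideal_N by (simp_all add: right_ideal_def left_ideal_def)

lemma diff_in_N: "x \<in> N \<Longrightarrow> y \<in> N \<Longrightarrow> x - y \<in> N"
  using add_in_N uminus_in_N by (metis diff_conv_add_uminus)

lemma one_notin_N: "1 \<notin> N"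
  using N_neq_UNIV mult_right_in_N by (metis UNIV_eq_I mult_1)

lemma nonzero_in_N: obtains a where "a \<in> N" "a \<noteq> 0"
  using N_neq_zero zero_in_N by blast

lemma unit_if_notin_N:
  assumes "x \<notin> N"
  obtains y where "x * y = 1" "y * x = 1"
proof -
  have "x \<noteq> 0" using assms zero_in_N by auto
  have "x \<in> range (\<lambda>r. x * r)" "x \<in> range (\<lambda>r. r * x)"
    by (metis mult_1_right rangeI, metis mult_1_left rangeI)
  then have "range (\<lambda>r. x * r) = UNIV" "range (\<lambda>r. r * x) = UNIV"
    using right_ideal_cases[OF right_ideal_range_mult_left, of x]
      left_ideal_cases[OF left_ideal_range_mult_right, of x] assms \<open>x \<noteq> 0\<close> by blast+
  then obtain y z where y: "x * y = 1" and z: "z * x = 1"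
    by (metis UNIV_I image_iff)
  have "z = y" by (metis mult.assoc mult_1_left mult_1_right y z)
  with y z show ?thesis using that by blast
qed

lemma mult_eq_0_iff_in_N:
  assumes "a \<in> N" "a \<noteq> 0"
  shows "a * r = 0 \<longleftrightarrow> r \<in> N"
proof
  assume "a * r = 0"
  have "N \<subseteq> {t. a * t = 0}" using mult_N_N assms by blast
  moreover have "1 \<notin> {t. a * t = 0}" using assms by simp
  ultimately have "{t. a * t = 0} = N"
    using right_ideal_cases[OF right_ideal_right_annihilator] N_neq_zero zero_in_N by blast
  with \<open>a * r = 0\<close> show "r \<in> N" by blast
qed (use mult_N_N assms in blast)

lemma range_mult_left_eq_N:
  assumes "a \<in> N" "a \<noteq> 0"
  shows "range (\<lambda>r. a * r) = N"
proof -
  have "range (\<lambda>r. a * r) \<subseteq> N" using mult_left_in_N mult_right_in_N assms by auto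
  moreover have "a \<in> range (\<lambda>r. a * r)" by (metis mult_1_right rangeI)
  ultimately show ?thesis
    using right_ideal_cases[OF right_ideal_range_mult_left] one_notin_N assms by blast
qed

lemma left_multiple_in_N:
  assumes "a \<in> N" "a \<noteq> 0" "b \<in> N"
  obtains c where "c * a = b"
proof -
  have "range (\<lambda>r. r * a) \<subseteq> N" using mult_left_in_N assms by auto
  moreover have "a \<in> range (\<lambda>r. r * a)" by (metis mult_1_left rangeI)
  ultimately have "range (\<lambda>r. r * a) = N"
    using left_ideal_cases[OF left_ideal_range_mult_right] one_notin_N assms by blast
  with assms(3) that show ?thesis by (metis image_iff)
qed

definition coset :: "'a \<Rightarrow> 'a set"
  where "coset x = (\<lambda>n. x + n) ` N"

lemma coset_eq_iff: "coset x = coset y \<longleftrightarrow> x - y \<in> N"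
proof
  assume "coset x = coset y"
  then have "x \<in> coset y" unfolding coset_def using zero_in_N by (metis add_0_right image_eqI)
  then show "x - y \<in> N" unfolding coset_def by auto
next
  assume d: "x - y \<in> N"
  have "x + n \<in> coset y" if "n \<in> N" for n
  proof -
    have "x + n = y + ((x - y) + n)" by (simp add: algebra_simps)
    then show ?thesis unfolding coset_def using add_in_N[OF d that] by blast
  qed
  moreover have "y + n \<in> coset x" if "n \<in> N" for n
  proof -
    have "y + n = x + (- (x - y) + n)" by (simp add: algebra_simps)
    then show ?thesis unfolding coset_def using add_in_N[OF uminus_in_N[OF d] that] by blast
  qed
  ultimately show "coset x = coset y" unfolding coset_def by blast
qed

lemma card_coset: "card (coset x) = card N"
  unfolding coset_def by (rule card_image) (simp add: inj_on_def)

lemma coset_disjoint: "coset x \<noteq> coset y \<Longrightarrow> coset x \<inter> coset y = {}"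
proof (erule contrapos_np)
  assume "coset x \<inter> coset y \<noteq> {}"
  then obtain n m where "n \<in> N" "m \<in> N" "x + n = y + m" unfolding coset_def by auto
  then have "x - y = m - n" by (simp add: algebra_simps)
  with \<open>n \<in> N\<close> \<open>m \<in> N\<close> show "coset x = coset y" using coset_eq_iff diff_in_N by simp
qed

lemma card_N_mult_card_cosets: "card N * card (range coset) = card (UNIV :: 'a set)"
proof -
  have "\<Union> (range coset) = UNIV"
    unfolding coset_def using zero_in_N by (auto intro: image_eqI[of _ _ 0])
  moreover have "card N * card (range coset) = card (\<Union> (range coset))"
    by (rule card_partition) (use card_coset coset_disjoint in auto)
  ultimately show ?thesis by simp
qed

lemma card_cosets: "card (range coset) = card N"
proof -
  obtain a where a: "a \<in> N" "a \<noteq> 0" by (rule nonzero_in_N)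
  have "coset x = coset y \<longleftrightarrow> a * x = a * y" for x y
    using coset_eq_iff[of x y] mult_eq_0_iff_in_N[OF a, of "x - y"]
    by (simp add: right_diff_distrib)
  then have "card (range coset) = card (range (\<lambda>r. a * r))"
    by (rule card_range_eq_of_eq_iff)
  then show ?thesis using range_mult_left_eq_N[OF a] by simp
qed

lemma card_N_eq:
  assumes "card (UNIV :: 'a set) = q * card N"
  shows "card N = q"
proof -
  have "card N > 0" using zero_in_N by (auto simp: card_gt_0_iff)
  moreover have "card N * card (range coset) = card N * q"
    using card_N_mult_card_cosets assms by (simp add: mult.commute)
  ultimately have "card (range coset) = q" using zero_in_N by auto
  then show ?thesis using card_cosets by simp
qed

end

section \<open>Lines through a normalised point\<close>

context chain_ring2
begin

(* The lines through (1, b, c) correspond bijectively to these second spanning vectors. *)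
definition directions :: "('a \<times> 'a \<times> 'a) set"
  where "directions = range (\<lambda>c. (0, 1, c)) \<union> (\<lambda>n. (0, n, 1)) ` N"

lemma card_directions: "card directions \<le> card (UNIV :: 'a set) + card N"
proof -
  have "card directions \<le> card (range (\<lambda>c::'a. (0::'a, 1::'a, c))) + card ((\<lambda>n. (0::'a, n, 1::'a)) ` N)"
    unfolding directions_def by (rule card_Un_le)
  also have "\<dots> \<le> card (UNIV :: 'a set) + card N"
    by (intro add_mono card_image_le) auto
  finally show ?thesis .
qed

lemma line_through_direction:
  assumes "z \<in> directions"
  shows "range (lincomb (1, b, c) z) \<in> PHG_lines"
proof -
  have "inj (lincomb (1, b, c) z)"
    using assms unfolding directions_def by (auto intro!: injI)
  then show ?thesis unfolding PHG_lines_iff by blast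
qed

lemma direction_eqI:
  assumes z: "z \<in> directions" and z': "z' \<in> directions"
    and eq: "range (lincomb (1, b, c) z) = range (lincomb (1, b, c) z')"
  shows "z = z'"
proof -
  have "z \<in> range (lincomb (1, b, c) z')"
    using eq right_in_range_lincomb[of z "(1, b, c)"] by simp
  then obtain r s where rs: "z = lincomb (1, b, c) z' (r, s)" by auto
  consider d d' where "z = (0, 1, d)" "z' = (0, 1, d')"
    | d n' where "z = (0, 1, d)" "z' = (0, n', 1)" "n' \<in> N"
    | n d' where "z = (0, n, 1)" "z' = (0, 1, d')" "n \<in> N"
    | n n' where "z = (0, n, 1)" "z' = (0, n', 1)" "n \<in> N" "n' \<in> N"
    using z z' unfolding directions_def by blast
  then show ?thesis
  proof cases
    case 2
    then have "n' * s = 1" using rs by auto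
    then show ?thesis using \<open>n' \<in> N\<close> mult_right_in_N one_notin_N by metis
  next
    case 3
    then have "d' * n = 1" using rs by auto
    then show ?thesis using \<open>n \<in> N\<close> mult_left_in_N one_notin_N by metis
  qed (use rs in auto)
qed

lemma direction_decomp:
  obtains z2 z3 t where "(0, z2, z3) \<in> directions" "x = z2 * t" "y = z3 * t"
    and "x \<notin> N \<or> y \<notin> N \<Longrightarrow> t \<notin> N"
proof (cases "x \<in> N")
  case False
  then obtain x' where x': "x * x' = 1" "x' * x = 1" by (rule unit_if_notin_N)
  have "(0, 1, y * x') \<in> directions" "y = (y * x') * x"
    by (simp_all add: directions_def mult.assoc x')
  with False that show ?thesis by fastforce
next
  case xN: True
  show ?thesis
  proof (cases "y \<in> N")
    case False
    then obtain y' where y': "y * y' = 1" "y' * y = 1" by (rule unit_if_notin_N)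
    have "(0, x * y', 1) \<in> directions" "x = (x * y') * y"
      using mult_right_in_N[OF xN] by (simp_all add: directions_def mult.assoc y')
    with False that show ?thesis by fastforce
  next
    case yN: True
    show ?thesis
    proof (cases "x = 0")
      case True
      have "(0, 0, 1) \<in> directions" using zero_in_N by (simp add: directions_def)
      with True xN yN that show ?thesis by fastforce
    next
      case False
      obtain c where "c * x = y" using left_multiple_in_N[OF xN False yN] .
      moreover have "(0, 1, c) \<in> directions" by (simp add: directions_def)
      ultimately show ?thesis using xN yN that by fastforce
    qed
  qed
qed

lemma line_exchange:
  fixes u w :: "'a \<times> 'a \<times> 'a"
  assumes L: "L = range (lincomb u w)" "inj (lincomb u w)" and v: "(1, b, c) \<in> L"
  obtains w' where "L = range (lincomb (1, b, c) w')" "inj (lincomb (1, b, c) w')"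
proof -
  define v where "v = (1::'a, b, c)"
  obtain u' w' \<alpha> \<beta> where L': "L = range (lincomb u' w')"
    and v_eq: "v = lincomb u' w' (\<alpha>, \<beta>)" and \<alpha>: "\<alpha> \<notin> N"
  proof -
    have "v \<in> range (lincomb u w)" using L(1) v v_def by simp
    then obtain \<alpha> \<beta> where v_eq: "v = lincomb u w (\<alpha>, \<beta>)" by auto
    have "1 = fst u * \<alpha> + fst w * \<beta>"
      using v_eq by (cases u; cases w) (simp add: v_def)
    then have "\<alpha> \<notin> N \<or> \<beta> \<notin> N"
      using add_in_N mult_left_in_N one_notin_N by metis
    moreover have "v = lincomb w u (\<beta>, \<alpha>)" using v_eq by (simp add: lincomb_swap)
    ultimately show ?thesis
      using that[of u w \<alpha> \<beta>] that[of w u \<beta> \<alpha>] L(1) v_eq range_lincomb_commute[of u w]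
      by blast
  qed
  obtain \<alpha>' where \<alpha>': "\<alpha> * \<alpha>' = 1" "\<alpha>' * \<alpha> = 1" using \<alpha> by (rule unit_if_notin_N)
  have "x = (x * \<alpha> + y * \<beta>) * \<alpha>' + y * - (\<beta> * \<alpha>')" for x y
    by (simp add: algebra_simps \<alpha>'(1))
  then have "u' = lincomb v w' (\<alpha>', - (\<beta> * \<alpha>'))"
    using v_eq by (cases u'; cases w') simp
  then have "L = range (lincomb v w')"
    unfolding L' using v_eq
    by (intro range_lincomb_eq) (auto intro: right_in_range_lincomb simp del: lincomb_simp)
  moreover from this have "inj (lincomb v w')"
    using inj_if_range_eq[of "lincomb v w'" "lincomb u w"] L by simp
  ultimately show ?thesis using that v_def by blast
qed

lemma line_through_normal_point:
  fixes b c :: 'a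
  assumes "L \<in> PHG_lines" "(1, b, c) \<in> L"
  obtains z where "z \<in> directions" "L = range (lincomb (1, b, c) z)"
proof -
  define v where "v = (1::'a, b, c)"
  obtain u w where "L = range (lincomb u w)" "inj (lincomb u w)"
    using assms(1) PHG_lines_iff by blast
  then obtain w' where L': "L = range (lincomb v w')" and inj': "inj (lincomb v w')"
    using line_exchange assms(2) unfolding v_def by blast
  obtain w1 w2 w3 where w': "w' = (w1, w2, w3)" by (cases w')
  define w'' where "w'' = (0::'a, w2 - b * w1, w3 - c * w1)"
  have "w'' = lincomb v w' (- w1, 1)" "w' = lincomb v w'' (w1, 1)"
    by (simp_all add: w''_def w' v_def algebra_simps)
  then have L'': "L = range (lincomb v w'')"
    unfolding L' by (intro range_lincomb_eq) (auto intro: left_in_range_lincomb simp del: lincomb_simp)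
  then have inj'': "inj (lincomb v w'')"
    using inj_if_range_eq[of "lincomb v w''" "lincomb v w'"] L' inj' by simp
  obtain z2 z3 t where z: "(0, z2, z3) \<in> directions"
    and xy: "w2 - b * w1 = z2 * t" "w3 - c * w1 = z3 * t"
    and unit: "w2 - b * w1 \<notin> N \<or> w3 - c * w1 \<notin> N \<Longrightarrow> t \<notin> N"
    using direction_decomp[of "w2 - b * w1" "w3 - c * w1"] by blast
  have "w2 - b * w1 \<notin> N \<or> w3 - c * w1 \<notin> N"
  proof (rule ccontr)
    assume "\<not> ?thesis"
    moreover obtain n where n: "n \<in> N" "n \<noteq> 0" by (rule nonzero_in_N)
    ultimately have "lincomb v w'' (0, n) = lincomb v w'' (0, 0)"
      using mult_N_N by (simp add: v_def w''_def)
    with inj'' n(2) show False by (auto dest: injD)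
  qed
  then obtain t' where t': "t * t' = 1" using unit unit_if_notin_N by metis
  have "(0, z2, z3) = lincomb v w'' (0, t')" "w'' = lincomb v (0, z2, z3) (0, t)"
    by (simp_all add: v_def w''_def xy mult.assoc t')
  then have "L = range (lincomb v (0, z2, z3))"
    unfolding L'' by (intro range_lincomb_eq) (auto intro: left_in_range_lincomb simp del: lincomb_simp)
  with z that show ?thesis unfolding v_def by blast
qed

lemma card_joining_lines_self:
  fixes b c :: 'a
  shows "card (joining_lines (point (1, b, c)) (point (1, b, c))) \<le> card directions"
proof -
  let ?line = "\<lambda>z. range (lincomb (1, b, c) z)"
  have "joining_lines (point (1, b, c)) (point (1, b, c)) \<subseteq> ?line ` directions"
  proof
    fix L assume "L \<in> joining_lines (point (1, b, c)) (point (1, b, c))"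
    then have "L \<in> PHG_lines" "(1, b, c) \<in> L"
      unfolding joining_lines_def using in_point by blast+
    then obtain z where "z \<in> directions" "L = ?line z" by (rule line_through_normal_point)
    then show "L \<in> ?line ` directions" by blast
  qed
  then have "card (joining_lines (point (1, b, c)) (point (1, b, c))) \<le> card (?line ` directions)"
    by (intro card_mono) simp_all
  also have "\<dots> \<le> card directions" by (rule card_image_le) simp
  finally show ?thesis .
qed

lemma joining_lines_nonempty:
  fixes b c :: 'a
  shows "joining_lines (point (1, b, c)) (point w) \<noteq> {}"
proof -
  obtain w1 w2 w3 where w: "w = (w1, w2, w3)" by (cases w)
  obtain z2 z3 t where z: "(0, z2, z3) \<in> directions"
    and xy: "w2 - b * w1 = z2 * t" "w3 - c * w1 = z3 * t"
    by (rule direction_decomp[of "w2 - b * w1" "w3 - c * w1"])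
  let ?L = "range (lincomb (1, b, c) (0, z2, z3))"
  have "w = lincomb (1, b, c) (0, z2, z3) (w1, t)"
    using xy by (simp add: w algebra_simps flip: xy)
  then have "point w \<subseteq> ?L"
    by (intro point_subset_range_lincomb) (simp del: lincomb_simp)
  moreover have "point (1, b, c) \<subseteq> ?L"
    by (intro point_subset_range_lincomb left_in_range_lincomb)
  ultimately have "?L \<in> joining_lines (point (1, b, c)) (point w)"
    unfolding joining_lines_def using line_through_direction[OF z] by blast
  then show ?thesis by blast
qed

lemma card_le_card_joining_lines:
  assumes "inj_on h A" "h ` A \<subseteq> directions"
    and "\<And>a. a \<in> A \<Longrightarrow> w \<in> range (lincomb (1, b, c) (h a))"
  shows "card A \<le> card (joining_lines (point (1, b, c)) (point w))"
proof (rule card_inj_on_le)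
  let ?line = "\<lambda>z. range (lincomb (1, b, c) z)"
  show "inj_on (?line \<circ> h) A"
  proof (rule inj_onI)
    fix a a' assume "a \<in> A" "a' \<in> A" "(?line \<circ> h) a = (?line \<circ> h) a'"
    with assms(2) have "h a = h a'" by (intro direction_eqI) auto
    with assms(1) \<open>a \<in> A\<close> \<open>a' \<in> A\<close> show "a = a'" by (auto dest: inj_onD)
  qed
  show "(?line \<circ> h) ` A \<subseteq> joining_lines (point (1, b, c)) (point w)"
  proof
    fix L assume "L \<in> (?line \<circ> h) ` A"
    then obtain a where a: "a \<in> A" "L = ?line (h a)" by auto
    have "L \<in> PHG_lines" using a assms(2) line_through_direction by blast
    moreover have "point (1, b, c) \<subseteq> L" "point w \<subseteq> L"
      unfolding a(2) using assms(3)[OF a(1)]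
      by (intro point_subset_range_lincomb left_in_range_lincomb)+
    ultimately show "L \<in> joining_lines (point (1, b, c)) (point w)"
      unfolding joining_lines_def by blast
  qed
qed simp

lemma card_joining_lines_neighbour:
  fixes b c :: 'a
  assumes x: "x \<in> N" and y: "y \<in> N" and xy: "(x, y) \<noteq> (0, 0)"
  shows "card N \<le> card (joining_lines (point (1, b, c)) (point (1, b + x, c + y)))"
  \<comment> \<open>the lines with directions (0, n, 1), resp. (0, 1, d + n), for n in N all contain the
    second point, because n x = n y = 0\<close>
proof (cases "x = 0")
  case True
  show ?thesis
  proof (rule card_le_card_joining_lines)
    show "inj_on (\<lambda>n. (0, n, 1)) N" by (simp add: inj_on_def)
    show "(\<lambda>n. (0, n, 1)) ` N \<subseteq> directions" by (auto simp: directions_def)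
    fix n assume "n \<in> N"
    then have "(1, b + x, c + y) = lincomb (1, b, c) (0, n, 1) (1, y)"
      using True mult_N_N y by simp
    then show "(1, b + x, c + y) \<in> range (lincomb (1, b, c) (0, n, 1))" by (metis rangeI)
  qed
next
  case False
  obtain d where d: "d * x = y" using left_multiple_in_N[OF x False y] .
  show ?thesis
  proof (rule card_le_card_joining_lines)
    show "inj_on (\<lambda>n. (0, 1, d + n)) N" by (simp add: inj_on_def)
    show "(\<lambda>n. (0, 1, d + n)) ` N \<subseteq> directions" by (auto simp: directions_def)
    fix n assume "n \<in> N"
    then have "(1, b + x, c + y) = lincomb (1, b, c) (0, 1, d + n) (1, x)"
      using d mult_N_N x by (simp add: distrib_right)
    then show "(1, b + x, c + y) \<in> range (lincomb (1, b, c) (0, 1, d + n))" by (metis rangeI)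
  qed
qed

end

section \<open>Rotation of coordinates\<close>

fun rot :: "'a \<times> 'a \<times> 'a \<Rightarrow> 'a \<times> 'a \<times> 'a"
  where "rot (a, b, c) = (b, c, a)"

lemma rot_rot_rot [simp]: "rot (rot (rot v)) = v"
  by (cases v) simp

lemma inj_rot: "inj rot"
  by (rule injI) (metis rot_rot_rot)

lemma rot_image_point: "rot ` point v = point (rot v)"
  by (cases v) (auto simp: image_image)

lemma rot_image_range_lincomb: "rot ` range (lincomb u w) = range (lincomb (rot u) (rot w))"
proof -
  have "rot (lincomb u w p) = lincomb (rot u) (rot w) p" for p
    by (cases u; cases w; cases p) simp
  then show ?thesis by (simp add: image_image)
qed

lemma rot_image_line: "L \<in> PHG_lines \<Longrightarrow> rot ` L \<in> PHG_lines"
proof -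
  assume "L \<in> PHG_lines"
  then obtain u w where L: "L = range (lincomb u w)" "inj (lincomb u w)"
    unfolding PHG_lines_iff by blast
  have "lincomb (rot u) (rot w) = rot \<circ> lincomb u w"
    by (rule ext, cases u, cases w) auto
  then have "inj (lincomb (rot u) (rot w))"
    using inj_compose[OF inj_rot L(2)] by simp
  then show ?thesis unfolding PHG_lines_iff L(1) rot_image_range_lincomb by blast
qed

lemma joining_lines_rot: "joining_lines (rot ` P) (rot ` Q) = image rot ` joining_lines P Q"
proof (intro subset_antisym subsetI)
  fix L assume L: "L \<in> joining_lines (rot ` P) (rot ` Q)"
  define L' where "L' = rot ` rot ` L"
  have L_eq: "L = rot ` L'"
    unfolding L'_def by (simp add: image_image)
  have "L' \<in> PHG_lines"
    using L unfolding L'_def joining_lines_def by (auto intro: rot_image_line)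
  moreover have "P \<subseteq> L'" "Q \<subseteq> L'"
    using L unfolding L_eq joining_lines_def inj_image_subset_iff[OF inj_rot] by auto
  ultimately show "L \<in> image rot ` joining_lines P Q"
    unfolding L_eq joining_lines_def by blast
qed (auto simp: joining_lines_def intro: rot_image_line)

lemma funpow_Suc_image: "(f ^^ Suc k) ` X = f ` (f ^^ k) ` X"
  by (simp add: image_image)

lemma joining_lines_funpow_rot:
  "joining_lines ((rot ^^ k) ` P) ((rot ^^ k) ` Q) = image (rot ^^ k) ` joining_lines P Q"
proof (induction k)
  case (Suc k)
  have "joining_lines ((rot ^^ Suc k) ` P) ((rot ^^ Suc k) ` Q)
      = joining_lines (rot ` (rot ^^ k) ` P) (rot ` (rot ^^ k) ` Q)"
    by (simp only: funpow_Suc_image)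
  also have "\<dots> = image rot ` image (rot ^^ k) ` joining_lines P Q"
    by (simp only: joining_lines_rot Suc)
  also have "\<dots> = image (rot ^^ Suc k) ` joining_lines P Q"
    by (simp add: image_image)
  finally show ?case .
qed simp

lemma card_joining_lines_funpow_rot:
  "card (joining_lines ((rot ^^ k) ` P) ((rot ^^ k) ` Q)) = card (joining_lines P Q)"
proof -
  have "inj_on (image (rot ^^ k)) (joining_lines P Q)"
    by (rule inj_on_image) (simp add: inj_on_subset[OF inj_fn[OF inj_rot]])
  then show ?thesis by (simp add: joining_lines_funpow_rot card_image)
qed

lemma funpow_rot_image_point: "(rot ^^ k) ` point v = point ((rot ^^ k) v)"
proof (induction k)
  case (Suc k)
  then show ?case by (simp only: funpow_Suc_image rot_image_point) simp
qed simp

section \<open>Lines through two points\<close>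

context chain_ring2
begin

definition unimodular :: "'a \<times> 'a \<times> 'a \<Rightarrow> bool"
  where "unimodular v \<longleftrightarrow> (case v of (a, b, c) \<Rightarrow> a \<notin> N \<or> b \<notin> N \<or> c \<notin> N)"

definition near :: "'a \<times> 'a \<times> 'a \<Rightarrow> 'a \<times> 'a \<times> 'a \<Rightarrow> bool"
  where "near v w \<longleftrightarrow>
    (case (v, w) of ((a, b, c), (a', b', c')) \<Rightarrow> a' - a \<in> N \<and> b' - b \<in> N \<and> c' - c \<in> N)"

lemma point_unimodular:
  fixes P :: "('a \<times> 'a \<times> 'a) set"
  assumes "P \<in> PHG_points"
  obtains v where "P = point v" "unimodular v"
proof -
  obtain v where v: "P = point v" "inj (smulr v)"
    using assms unfolding PHG_points_def by blast
  obtain a b c where abc: "v = (a, b, c)" by (cases v)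
  have "unimodular v"
  proof (rule ccontr)
    assume "\<not> unimodular v"
    then have "a \<in> N" "b \<in> N" "c \<in> N" by (auto simp: unimodular_def abc)
    moreover obtain t where "t \<in> N" "t \<noteq> 0" by (rule nonzero_in_N)
    ultimately have "smulr v t = smulr v 0" "t \<noteq> 0" using mult_N_N by (simp_all add: abc)
    with v(2) show False by (auto dest: injD)
  qed
  with v(1) that show ?thesis by blast
qed

lemma rotate_to_unit:
  assumes "unimodular v"
  obtains k where "fst ((rot ^^ k) v) \<notin> N"
proof -
  obtain a b c where v: "v = (a, b, c)" by (cases v)
  have "(rot ^^ 0) v = (a, b, c)" "(rot ^^ 1) v = (b, c, a)" "(rot ^^ 2) v = (c, a, b)"
    by (simp_all add: v numeral_2_eq_2)
  moreover consider "a \<notin> N" | "b \<notin> N" | "c \<notin> N"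
    using assms unfolding unimodular_def v by auto
  ultimately show ?thesis using that by (cases; metis fst_conv)
qed

lemma near_funpow_rot: "near v w \<Longrightarrow> near ((rot ^^ k) v) ((rot ^^ k) w)"
proof (induction k)
  case (Suc k)
  then show ?case
    by (cases "(rot ^^ k) v"; cases "(rot ^^ k) w") (auto simp: near_def)
qed simp

lemma card_joining_lines_self_le:
  fixes P :: "('a \<times> 'a \<times> 'a) set"
  assumes "P \<in> PHG_points"
  shows "card (joining_lines P P) \<le> card (UNIV :: 'a set) + card N"
proof -
  obtain v where v: "P = point v" "unimodular v" using assms by (rule point_unimodular)
  obtain k where k: "fst ((rot ^^ k) v) \<notin> N" using v(2) by (rule rotate_to_unit)
  obtain a b c where abc: "(rot ^^ k) v = (a, b, c)" by (cases "(rot ^^ k) v")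
  obtain a' where a': "a * a' = 1" "a' * a = 1" using k abc unit_if_notin_N by auto
  have "card (joining_lines P P) = card (joining_lines ((rot ^^ k) ` P) ((rot ^^ k) ` P))"
    by (rule card_joining_lines_funpow_rot[symmetric])
  also have "\<dots> = card (joining_lines (point (1, b * a', c * a')) (point (1, b * a', c * a')))"
    unfolding v(1) funpow_rot_image_point abc point_normalize[OF a'] ..
  also have "\<dots> \<le> card directions" by (rule card_joining_lines_self)
  also have "\<dots> \<le> card (UNIV :: 'a set) + card N" by (rule card_directions)
  finally show ?thesis .
qed

lemma joining_lines_points_nonempty:
  fixes P Q :: "('a \<times> 'a \<times> 'a) set"
  assumes "P \<in> PHG_points" "Q \<in> PHG_points"
  shows "joining_lines P Q \<noteq> {}"
proof -
  obtain v where v: "P = point v" "unimodular v" using assms(1) by (rule point_unimodular)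
  obtain w where w: "Q = point w" using assms(2) unfolding PHG_points_def by blast
  obtain k where k: "fst ((rot ^^ k) v) \<notin> N" using v(2) by (rule rotate_to_unit)
  obtain a b c where abc: "(rot ^^ k) v = (a, b, c)" by (cases "(rot ^^ k) v")
  obtain a' where a': "a * a' = 1" "a' * a = 1" using k abc unit_if_notin_N by auto
  have "joining_lines (point (1, b * a', c * a')) (point ((rot ^^ k) w)) \<noteq> {}"
    by (rule joining_lines_nonempty)
  then have "joining_lines ((rot ^^ k) ` P) ((rot ^^ k) ` Q) \<noteq> {}"
    unfolding v(1) w funpow_rot_image_point abc point_normalize[OF a'] .
  then show ?thesis unfolding joining_lines_funpow_rot by blast
qed

lemma inverse_diff_in_N:
  assumes "v * v' = 1" "w' * w = 1" "w - v \<in> N"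
  shows "w' - v' \<in> N"
proof -
  have "w' * (v - w) * v' = w' * (v * v') - (w' * w) * v'"
    by (simp add: algebra_simps)
  also have "\<dots> = w' - v'" by (simp add: assms(1,2))
  finally have eq: "w' - v' = w' * ((v - w) * v')" by (simp add: mult.assoc)
  have "v - w \<in> N" using uminus_in_N[OF assms(3)] by simp
  then show ?thesis unfolding eq by (intro mult_left_in_N mult_right_in_N)
qed

lemma card_joining_lines_near_unit:
  assumes v1: "v1 \<notin> N" and near: "near (v1, v2, v3) w"
    and ne: "point (v1, v2, v3) \<noteq> point w"
  shows "card N \<le> card (joining_lines (point (v1, v2, v3)) (point w))"
proof -
  obtain w1 w2 w3 where w: "w = (w1, w2, w3)" by (cases w)
  have d: "w1 - v1 \<in> N" "w2 - v2 \<in> N" "w3 - v3 \<in> N"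
    using near by (simp_all add: near_def w)
  have w1: "w1 \<notin> N"
  proof
    assume "w1 \<in> N"
    then have "w1 - (w1 - v1) \<in> N" using diff_in_N d(1) by blast
    with v1 show False by simp
  qed
  obtain v' where v': "v1 * v' = 1" "v' * v1 = 1" using v1 by (rule unit_if_notin_N)
  obtain w' where w': "w1 * w' = 1" "w' * w1 = 1" using w1 by (rule unit_if_notin_N)
  have dinv: "w' - v' \<in> N" using inverse_diff_in_N v'(1) w'(2) d(1) .
  define x where "x = w2 * w' - v2 * v'"
  define y where "y = w3 * w' - v3 * v'"
  have "x = (w2 - v2) * w' + v2 * (w' - v')" "y = (w3 - v3) * w' + v3 * (w' - v')"
    by (simp_all add: x_def y_def algebra_simps)
  then have xy: "x \<in> N" "y \<in> N"
    using add_in_N[OF mult_right_in_N[OF d(2)] mult_left_in_N[OF dinv]]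
      add_in_N[OF mult_right_in_N[OF d(3)] mult_left_in_N[OF dinv]] by simp_all
  have points: "point (v1, v2, v3) = point (1, v2 * v', v3 * v')"
    "point w = point (1, v2 * v' + x, v3 * v' + y)"
    using point_normalize[OF v'] point_normalize[OF w'] by (simp_all add: w x_def y_def)
  with ne have "(x, y) \<noteq> (0, 0)" by auto
  from card_joining_lines_neighbour[OF xy this] show ?thesis unfolding points .
qed

lemma card_joining_lines_near:
  assumes "unimodular v" "near v w" "point v \<noteq> point w"
  shows "card N \<le> card (joining_lines (point v) (point w))"
proof -
  obtain k where k: "fst ((rot ^^ k) v) \<notin> N" using assms(1) by (rule rotate_to_unit)
  obtain a b c where abc: "(rot ^^ k) v = (a, b, c)" by (cases "(rot ^^ k) v")
  have "(rot ^^ k) ` point v \<noteq> (rot ^^ k) ` point w"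
    using assms(3) by (simp add: inj_image_eq_iff[OF inj_fn[OF inj_rot]])
  then have ne: "point (a, b, c) \<noteq> point ((rot ^^ k) w)"
    by (simp only: funpow_rot_image_point abc) simp
  have a: "a \<notin> N" using k abc by simp
  have "near (a, b, c) ((rot ^^ k) w)"
    using near_funpow_rot[OF assms(2), of k] by (simp only: abc)
  from card_joining_lines_near_unit[OF a this ne]
  show ?thesis
    unfolding abc[symmetric] funpow_rot_image_point[symmetric] card_joining_lines_funpow_rot .
qed

end

section \<open>Neighbour classes\<close>

context chain_ring2
begin

definition normal :: "'a \<times> 'a \<times> 'a \<Rightarrow> bool"
  where "normal v \<longleftrightarrow>
    (case v of (a, b, c) \<Rightarrow> a = 1 \<or> (a \<in> N \<and> b = 1) \<or> (a \<in> N \<and> b \<in> N \<and> c = 1))"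

lemma normal_representative:
  fixes P :: "('a \<times> 'a \<times> 'a) set"
  assumes "P \<in> PHG_points"
  shows "\<exists>v. P = point v \<and> normal v"
proof -
  obtain v where v: "P = point v" "unimodular v" using assms by (rule point_unimodular)
  obtain a b c where abc: "v = (a, b, c)" by (cases v)
  have scale: "P = point (smulr v u')" if "u * u' = 1" "u' * u = 1" for u u'
    using point_smulr_unit[of u' u v] that v(1) by simp
  consider "a \<notin> N" | "a \<in> N" "b \<notin> N" | "a \<in> N" "b \<in> N" "c \<notin> N"
    using v(2) unfolding unimodular_def abc by auto
  then show ?thesis
  proof cases
    case 1
    obtain a' where "a * a' = 1" "a' * a = 1" using 1 by (rule unit_if_notin_N)
    with scale have "P = point (smulr v a') \<and> normal (smulr v a')"
      by (simp add: abc normal_def)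
    then show ?thesis ..
  next
    case 2
    obtain b' where "b * b' = 1" "b' * b = 1" using 2(2) by (rule unit_if_notin_N)
    with scale 2(1) have "P = point (smulr v b') \<and> normal (smulr v b')"
      by (simp add: abc normal_def mult_right_in_N)
    then show ?thesis ..
  next
    case 3
    obtain c' where "c * c' = 1" "c' * c = 1" using 3(3) by (rule unit_if_notin_N)
    with scale 3(1,2) have "P = point (smulr v c') \<and> normal (smulr v c')"
      by (simp add: abc normal_def mult_right_in_N)
    then show ?thesis ..
  qed
qed

definition normal_rep :: "('a \<times> 'a \<times> 'a) set \<Rightarrow> 'a \<times> 'a \<times> 'a"
  where "normal_rep P = (SOME v. P = point v \<and> normal v)"

lemma normal_rep:
  assumes "P \<in> PHG_points"
  shows "P = point (normal_rep P)" "normal (normal_rep P)"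
  using someI_ex[OF normal_representative[OF assms]] unfolding normal_rep_def by auto

(* Neighbours are points whose normalised representatives agree modulo N; the classes correspond
   to the points of the residue plane over R/N. *)
definition neighbour_class :: "('a \<times> 'a \<times> 'a) set \<Rightarrow> 'a set \<times> 'a set \<times> 'a set"
  where "neighbour_class P = (case normal_rep P of (a, b, c) \<Rightarrow> (coset a, coset b, coset c))"

definition neighbour_classes :: "('a set \<times> 'a set \<times> 'a set) set"
  where "neighbour_classes =
    {coset 1} \<times> range coset \<times> range coset \<union> {coset 0} \<times> {coset 1} \<times> range coset
      \<union> {(coset 0, coset 0, coset 1)}"

definition neighbours_in :: "('a \<times> 'a \<times> 'a) set set \<Rightarrow> ('a \<times> 'a \<times> 'a) set \<Rightarrow> ('a \<times> 'a \<times> 'a) set set"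
  where "neighbours_in S P = {Q \<in> S. neighbour_class Q = neighbour_class P}"

lemma neighbour_class_mem:
  assumes "P \<in> PHG_points"
  shows "neighbour_class P \<in> neighbour_classes"
proof -
  obtain a b c where abc: "normal_rep P = (a, b, c)" by (cases "normal_rep P")
  have "coset x = coset 0" if "x \<in> N" for x using that coset_eq_iff by simp
  then show ?thesis
    using normal_rep(2)[OF assms]
    unfolding neighbour_class_def neighbour_classes_def normal_def abc by auto
qed

lemma card_neighbour_classes:
  "card neighbour_classes \<le> card (range coset) * card (range coset) + card (range coset) + 1"
proof -
  have "card neighbour_classes \<le> card ({coset 1} \<times> range coset \<times> range coset)
      + card ({coset 0} \<times> {coset 1} \<times> range coset) + card {(coset 0, coset 0, coset 1)}"
    unfolding neighbour_classes_def by (meson card_Un_le add_mono order_trans le_refl)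
  then show ?thesis by (simp add: card_cartesian_product)
qed

lemma card_joining_lines_same_class:
  fixes P Q :: "('a \<times> 'a \<times> 'a) set"
  assumes P: "P \<in> PHG_points" and Q: "Q \<in> PHG_points"
    and same: "neighbour_class P = neighbour_class Q" and "P \<noteq> Q"
  shows "card N \<le> card (joining_lines P Q)"
proof -
  obtain a b c where v: "normal_rep P = (a, b, c)" by (cases "normal_rep P")
  obtain a' b' c' where w: "normal_rep Q = (a', b', c')" by (cases "normal_rep Q")
  have "(coset a', coset b', coset c') = (coset a, coset b, coset c)"
    using same unfolding neighbour_class_def v w by simp
  then have near: "near (a, b, c) (a', b', c')" by (simp add: near_def coset_eq_iff)
  have "unimodular (a, b, c)"
    using normal_rep(2)[OF P] one_notin_N unfolding v normal_def unimodular_def by auto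
  moreover note near
  moreover have PQ: "P = point (a, b, c)" "Q = point (a', b', c')"
    using normal_rep(1) P Q v w by metis+
  then have "point (a, b, c) \<noteq> point (a', b', c')" using \<open>P \<noteq> Q\<close> by simp
  ultimately show ?thesis unfolding PQ by (rule card_joining_lines_near)
qed

end

section \<open>Counting\<close>

lemma card_sq_le_card_mult_sum_fibres:
  fixes f :: "'b \<Rightarrow> 'c"
  assumes S: "finite S" and T: "finite T" and ST: "f ` S \<subseteq> T"
  shows "real (card S) ^ 2 \<le> real (card T) * (\<Sum>x\<in>S. real (card {y \<in> S. f y = f x}))"
proof -
  define fibre where "fibre t = real (card {y \<in> S. f y = t})" for t
  have "real (card S) = (\<Sum>x\<in>S. 1)" by simp
  also have "\<dots> = (\<Sum>t\<in>T. \<Sum>x\<in>{x \<in> S. f x = t}. 1)"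
    by (rule sum.group[OF S T ST, symmetric])
  also have "\<dots> = (\<Sum>t\<in>T. fibre t * 1)" by (simp add: fibre_def)
  finally have "real (card S) ^ 2 \<le> (\<Sum>t\<in>T. fibre t ^ 2) * (\<Sum>t\<in>T. 1 ^ 2)"
    using Cauchy_Schwarz_ineq_sum[of fibre "\<lambda>_. 1" T] by simp
  also have "(\<Sum>t\<in>T. fibre t ^ 2) = (\<Sum>t\<in>T. \<Sum>x\<in>{x \<in> S. f x = t}. fibre (f x))"
    by (simp add: fibre_def power2_eq_square)
  also have "\<dots> = (\<Sum>x\<in>S. fibre (f x))" by (rule sum.group[OF S T ST])
  finally show ?thesis by (simp add: fibre_def mult.commute)
qed

lemma sum_card_joining_lines_le:
  fixes x :: "('a::{ring_1,finite} \<times> 'a \<times> 'a) set"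
  assumes S: "finite S" and arc: "\<forall>L\<in>PHG_lines. card {y \<in> S. y \<subseteq> L} \<le> n"
  shows "(\<Sum>y\<in>S. card (joining_lines x y)) \<le> card (joining_lines x x) * n"
proof -
  let ?J = "joining_lines x x"
  have J: "finite ?J" by (rule finite)
  have "(\<Sum>y\<in>S. card (joining_lines x y)) = (\<Sum>y\<in>S. card {L \<in> ?J. y \<subseteq> L})"
    by (intro sum.cong refl arg_cong[where f = card]) (auto simp: joining_lines_def)
  also have "\<dots> = (\<Sum>L\<in>?J. card {y \<in> S. y \<subseteq> L})"
    by (rule sum_multicount_gen[OF S J]) simp
  also have "\<dots> \<le> (\<Sum>L\<in>?J. n)"
    by (rule sum_mono) (use arc in \<open>simp add: joining_lines_def\<close>)
  finally show ?thesis by simp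
qed

lemma m_n_attained: "\<exists>S :: ('a \<times> 'a \<times> 'a) set set. proj_arc S (m_n TYPE('a::{ring_1,finite}) n) n"
proof -
  let ?A = "{k. \<exists>S :: ('a \<times> 'a \<times> 'a) set set. proj_arc S k n}"
  have "?A \<subseteq> {..card (UNIV :: ('a \<times> 'a \<times> 'a) set set)}"
  proof
    fix k assume "k \<in> ?A"
    then obtain S :: "('a \<times> 'a \<times> 'a) set set" where "proj_arc S k n" by blast
    then have "k = card S" unfolding proj_arc_def by simp
    also have "\<dots> \<le> card (UNIV :: ('a \<times> 'a \<times> 'a) set set)"
      by (rule card_mono) simp_all
    finally show "k \<in> {..card (UNIV :: ('a \<times> 'a \<times> 'a) set set)}" by simp
  qed
  then have "finite ?A" by (rule finite_subset) simp
  moreover have "proj_arc ({} :: ('a \<times> 'a \<times> 'a) set set) 0 n"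
    unfolding proj_arc_def by simp
  then have "?A \<noteq> {}" by blast
  ultimately have "Max ?A \<in> ?A" by (rule Max_in)
  then show ?thesis unfolding m_n_def by simp
qed

lemma mult_le_of_quadratic_bounds:
  fixes k C q B M :: real
  assumes sum: "k * k + (q - 1) * C \<le> k * B" and cs: "k * k \<le> M * C"
    and q: "1 \<le> q" and M: "0 < M" and k: "0 < k"
  shows "k * (M + q - 1) \<le> M * B"
proof -
  have "M * (k * k) + (q - 1) * (k * k) \<le> M * (k * k) + (q - 1) * (M * C)"
    using mult_left_mono[OF cs, of "q - 1"] q by simp
  also have "\<dots> = M * (k * k + (q - 1) * C)" by (simp add: algebra_simps)
  also have "\<dots> \<le> M * (k * B)" using mult_left_mono[OF sum, of M] M by simp
  finally have "k * (k * (M + q - 1)) \<le> k * (M * B)" by (simp add: algebra_simps)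
  with k show ?thesis by simp
qed

context chain_ring2
begin

lemma arc_point_bound:
  fixes S :: "('a \<times> 'a \<times> 'a) set set"
  assumes points: "S \<subseteq> PHG_points" and S: "finite S"
    and arc: "\<forall>L\<in>PHG_lines. card {y \<in> S. y \<subseteq> L} \<le> n"
    and x: "x \<in> S" and q: "card N = q" "card (UNIV :: 'a set) = q * q"
  shows "card S + (q - 1) * card (neighbours_in S x) \<le> q + (q * q + q) * (n - 1)"
proof -
  define \<mu> where "\<mu> y = card (joining_lines x y)" for y
  define \<phi> where "\<phi> y = 1 + (if y \<in> neighbours_in S x then q - 1 else 0)" for y
  have "q \<ge> 1" using q(1) zero_in_N by (auto simp: Suc_le_eq card_gt_0_iff)
  have \<phi>_le: "\<phi> y \<le> \<mu> y" if "y \<in> S - {x}" for y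
  proof -
    have "x \<in> PHG_points" "y \<in> PHG_points" "x \<noteq> y" using that x points by auto
    then have "1 \<le> \<mu> y" "y \<in> neighbours_in S x \<Longrightarrow> q \<le> \<mu> y"
      using joining_lines_points_nonempty card_joining_lines_same_class q(1)
      by (auto simp: \<mu>_def neighbours_in_def Suc_le_eq card_gt_0_iff)
    then show ?thesis using \<open>q \<ge> 1\<close> by (simp add: \<phi>_def)
  qed
  have "neighbours_in S x \<subseteq> S" by (auto simp: neighbours_in_def)
  then have "(\<Sum>y\<in>S. if y \<in> neighbours_in S x then q - 1 else 0) = (q - 1) * card (neighbours_in S x)"
    using S by (simp add: sum.If_cases Int_absorb1)
  then have "card S + (q - 1) * card (neighbours_in S x) = (\<Sum>y\<in>S. \<phi> y)"
    unfolding \<phi>_def sum.distrib by simp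
  also have "\<dots> = q + (\<Sum>y\<in>S - {x}. \<phi> y)"
    using \<open>q \<ge> 1\<close> x by (simp add: sum.remove[OF S x] \<phi>_def neighbours_in_def)
  also have "(\<Sum>y\<in>S - {x}. \<phi> y) \<le> (\<Sum>y\<in>S - {x}. \<mu> y)"
    by (rule sum_mono) (rule \<phi>_le)
  also have "\<dots> = (\<Sum>y\<in>S. \<mu> y) - \<mu> x"
    by (simp add: sum.remove[OF S x])
  also have "\<dots> \<le> \<mu> x * n - \<mu> x"
    using sum_card_joining_lines_le[OF S arc, of x] by (simp add: \<mu>_def)
  also have "\<dots> = \<mu> x * (n - 1)" by (simp add: diff_mult_distrib2)
  also have "\<dots> \<le> (q * q + q) * (n - 1)"
  proof (rule mult_right_mono)
    show "\<mu> x \<le> q * q + q"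
      using card_joining_lines_self_le[of x] x points q by (auto simp: \<mu>_def)
  qed simp
  finally show ?thesis by simp
qed

lemma proj_arc_sum_neighbours:
  fixes S :: "('a \<times> 'a \<times> 'a) set set"
  assumes arc: "proj_arc S k n" and n: "1 \<le> n"
    and q: "card N = q" "card (UNIV :: 'a set) = q * q"
  shows "real k * real k + (real q - 1) * (\<Sum>x\<in>S. real (card (neighbours_in S x)))
    \<le> real k * (real q * (real (q + 1) * real n - real q))"
proof -
  have "q \<ge> 1" using q(1) zero_in_N by (auto simp: Suc_le_eq card_gt_0_iff)
  have points: "S \<subseteq> PHG_points" and S: "finite S" and k: "card S = k"
    and lines: "\<forall>L\<in>PHG_lines. card {y \<in> S. y \<subseteq> L} \<le> n"
    using arc unfolding proj_arc_def by auto
  define B where "B = real q * (real (q + 1) * real n - real q)"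
  have "real (n - 1) = real n - 1" using n by simp
  then have B: "real (q + (q * q + q) * (n - 1)) = B"
    by (simp only: of_nat_add of_nat_mult) (simp add: B_def algebra_simps)
  have "real k + (real q - 1) * real (card (neighbours_in S x)) \<le> B" if "x \<in> S" for x
  proof -
    have "real (k + (q - 1) * card (neighbours_in S x)) \<le> real (q + (q * q + q) * (n - 1))"
      using arc_point_bound[OF points S lines that q] unfolding k by (simp only: of_nat_le_iff)
    then show ?thesis using \<open>q \<ge> 1\<close> unfolding B by simp
  qed
  then have "(\<Sum>x\<in>S. real k + (real q - 1) * real (card (neighbours_in S x))) \<le> (\<Sum>x\<in>S. B)"
    by (rule sum_mono)
  then show ?thesis by (simp add: sum.distrib sum_distrib_left k B_def)
qed

lemma proj_arc_square_le:
  fixes S :: "('a \<times> 'a \<times> 'a) set set"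
  assumes arc: "proj_arc S k n" and q: "card (range coset) = q"
  shows "real k * real k \<le> real (q * q + q + 1) * (\<Sum>x\<in>S. real (card (neighbours_in S x)))"
proof -
  have points: "S \<subseteq> PHG_points" and S: "finite S" and k: "card S = k"
    using arc unfolding proj_arc_def by auto
  have "real k ^ 2 \<le> real (card neighbour_classes) * (\<Sum>x\<in>S. real (card (neighbours_in S x)))"
    unfolding neighbours_in_def k[symmetric]
    by (rule card_sq_le_card_mult_sum_fibres[OF S]) (use neighbour_class_mem points in auto)
  also have "\<dots> \<le> real (q * q + q + 1) * (\<Sum>x\<in>S. real (card (neighbours_in S x)))"
  proof (rule mult_right_mono)
    show "real (card neighbour_classes) \<le> real (q * q + q + 1)"
      unfolding of_nat_le_iff using card_neighbour_classes q by simp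
  qed (simp add: sum_nonneg)
  finally show ?thesis by (simp add: power2_eq_square)
qed

lemma proj_arc_card_le:
  fixes S :: "('a \<times> 'a \<times> 'a) set set"
  assumes card_UNIV: "card (UNIV :: 'a set) = q * card N"
    and arc: "proj_arc S k n" and n: "1 \<le> n"
  shows "real k \<le> (real ((q + 1) * n) - real q) / real (q + 2) * real (q ^ 2 + q + 1)"
proof (cases "k = 0")
  case False
  have q: "card N = q" "card (UNIV :: 'a set) = q * q" "card (range coset) = q"
    using card_N_eq[OF card_UNIV] card_UNIV card_cosets by simp_all
  have "q \<ge> 1" using q(1) zero_in_N by (auto simp: Suc_le_eq card_gt_0_iff)
  define M where "M = real (q * q + q + 1)"
  have "0 < M" unfolding M_def by (simp only: of_nat_0_less_iff)
  then have "real k * (M + real q - 1) \<le> M * (real q * (real (q + 1) * real n - real q))"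
    using proj_arc_sum_neighbours[OF arc n q(1,2)] proj_arc_square_le[OF arc q(3)] \<open>q \<ge> 1\<close> False
    unfolding M_def[symmetric] by (intro mult_le_of_quadratic_bounds) simp_all
  moreover have "M + real q - 1 = real q * real (q + 2)" by (simp add: M_def algebra_simps)
  ultimately have "real q * (real k * real (q + 2)) \<le> real q * (M * (real (q + 1) * real n - real q))"
    by (simp add: algebra_simps)
  then have "real k * real (q + 2) \<le> M * (real (q + 1) * real n - real q)"
    using \<open>q \<ge> 1\<close> by simp
  then show ?thesis by (simp add: M_def field_simps power2_eq_square)
next
  case True
  have "q \<le> (q + 1) * n" using mult_le_mono2[OF n, of "q + 1"] by simp
  then have "0 \<le> real ((q + 1) * n) - real q" by (simp only: of_nat_le_iff diff_ge_0_iff_ge)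
  with True show ?thesis by simp
qed

end

theorem corollary4p9:
  fixes N :: "'a::{ring_1,finite} set" and q n :: nat
  assumes "chain_ring_len2 N"
    and "card (UNIV :: 'a set) = q * card N"
    and "1 \<le> n" and "n \<le> q ^ 2 + q"
  shows "int (m_n TYPE('a) n)
           \<le> \<lfloor>(real ((q + 1) * n) - real q) / real (q + 2) * real (q ^ 2 + q + 1)\<rfloor>"
proof -
  interpret chain_ring2 N by unfold_locales (rule assms(1))
  obtain S :: "('a \<times> 'a \<times> 'a) set set" where "proj_arc S (m_n TYPE('a) n) n"
    using m_n_attained by blast
  from proj_arc_card_le[OF assms(2) this assms(3)] show ?thesis
    by (simp add: le_floor_iff)
qed

end
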